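(* Let $n,N,M,K\geq 1$, let $D=-i\sum_{j=1}^n\hat{D}_j\partial_j$ with $\hat{D}_j\in\mathcal{L}(\mathbb{C}^N,\mathbb{C}^M)$ and symbol $\hat{D}(\xi)=\sum_j\hat{D}_j\xi_j$, and let $A\in L^\infty(\mathbb{R}^n;\mathcal{L}(\mathbb{C}^M,\mathbb{C}^K))$. Suppose that for some $p\in[1,\infty)$ there is $c>0$ with $$\|ADu\|_{L^p(\mathbb{R}^n;\mathbb{C}^K)}\geq c\|Du\|_{L^p(\mathbb{R}^n;\mathbb{C}^M)}\qquad\text{for all }u\in C_c^\infty(\mathbb{R}^n;\mathbb{C}^N).$$ Then there is $c'>0$ such that $|A(x)\hat{D}(\xi)v|\geq c'|\hat{D}(\xi)v|$ for all $\xi\in\mathbb{R}^n$, all $v\in\mathbb{C}^N$, and almost every $x\in\mathbb{R}^n$. *)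

theory Defs
  imports "HOL-Analysis.Analysis"
begin

definition partial_deriv :: "(real^'n \<Rightarrow> 'a::real_normed_vector) \<Rightarrow> 'n \<Rightarrow> real^'n \<Rightarrow> 'a" where
  "partial_deriv f j x = frechet_derivative f (at x) (axis j 1)"

coinductive smooth_fun :: "(real^'n \<Rightarrow> 'a::real_normed_vector) \<Rightarrow> bool" where
  "(\<forall>x. f differentiable (at x)) \<Longrightarrow> (\<forall>j. smooth_fun (partial_deriv f j)) \<Longrightarrow> smooth_fun f"

definition test_fun :: "(real^'n \<Rightarrow> 'a::real_normed_vector) \<Rightarrow> bool" where
  "test_fun u \<longleftrightarrow> smooth_fun u \<and> compact (closure {x. u x \<noteq> 0})"

definition diff_op :: "('n \<Rightarrow> complex^'N^'M) \<Rightarrow> (real^'n \<Rightarrow> complex^'N) \<Rightarrow> real^'n \<Rightarrow> complex^'M" where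
  "diff_op Dh u x = (- \<i>) *s (\<Sum>j\<in>UNIV. Dh j *v partial_deriv u j x)"

definition symbol :: "('n \<Rightarrow> complex^'N^'M) \<Rightarrow> real^'n \<Rightarrow> complex^'N^'M" where
  "symbol Dh \<xi> = (\<Sum>j\<in>UNIV. (\<xi> $ j) *\<^sub>R Dh j)"

definition Lp_norm :: "real \<Rightarrow> (real^'n \<Rightarrow> 'a::real_normed_vector) \<Rightarrow> real" where
  "Lp_norm p f = (\<integral>x. norm (f x) powr p \<partial>lebesgue) powr (1 / p)"

definition Linfty :: "(real^'n \<Rightarrow> 'a::real_normed_vector) \<Rightarrow> bool" where
  "Linfty A \<longleftrightarrow> A \<in> borel_measurable lebesgue \<and> (\<exists>B. AE x in lebesgue. norm (A x) \<le> B)"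

end

theory Submission
  imports Defs "HOL-Computational_Algebra.Polynomial"
begin

text \<open>
  Test the inequality on the wave packets \<open>u = e^(i \<lambda> \<xi>\<cdot>x) \<phi> v\<close>, where \<open>\<phi>\<close> is a smooth
  bump supported in a box. Since \<open>D u = e^(i \<lambda> \<xi>\<cdot>x) (\<lambda> \<phi> Dhat(\<xi>) v + D(\<phi> v))\<close>, dividing
  by \<open>\<lambda>\<close> and letting \<open>\<lambda> \<rightarrow> \<infinity>\<close> (dominated convergence) yields
  \<open>c^p \<integral> \<phi>^p |w|^p \<le> \<integral> \<phi>^p |A w|^p\<close> for \<open>w = Dhat(\<xi>) v\<close> and every box.
  If \<open>|A w|^p < c^p |w|^p - \<gamma>\<close> held on a set \<open>E\<close> of positive measure, a box in which \<open>E\<close>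
  has density close to one (found by covering \<open>E\<close> from outside with dyadic boxes) would
  violate this weighted inequality, because \<open>\<phi>\<close> is bounded below on the middle half of
  its box. Hence \<open>|A(x) w| \<ge> c |w|\<close> almost everywhere, i.e. \<open>c' = c\<close> works.
\<close>

lemma norm_vector_smult: "norm ((c::'a::real_normed_div_algebra) *s (y::'a^'n::finite)) = norm c * norm y"
  by (simp add: norm_vec_def norm_mult L2_set_right_distrib)

lemma bounded_bilinear_vector_smult:
  "bounded_bilinear (\<lambda>(c::'a::real_normed_field) (y::'a^'n::finite). c *s y)"
proof (rule bounded_bilinear.intro)
  show "\<exists>K. \<forall>c (y::'a^'n). norm (c *s y) \<le> norm c * norm y * K"
    by (rule exI[of _ 1]) (simp add: norm_vector_smult)
qed (simp_all add: vec_eq_iff algebra_simps)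

lemmas continuous_on_vector_smult [continuous_intros] =
  bounded_bilinear.continuous_on[OF bounded_bilinear_vector_smult]

lemmas has_derivative_vector_smult [derivative_intros] =
  bounded_bilinear.FDERIV[OF bounded_bilinear_vector_smult]

lemmas tendsto_vector_smult [tendsto_intros] =
  bounded_bilinear.tendsto[OF bounded_bilinear_vector_smult]

lemma matrix_vector_mult_sum_left:
  "(\<Sum>j\<in>S. M j) *v y = (\<Sum>j\<in>S. M j *v (y::'a::comm_semiring_1^'N::finite))"
  by (induct S rule: infinite_finite_induct) (auto simp: matrix_vector_mult_add_rdistrib)

lemma scaleR_matrix_vector_mult:
  "(r *\<^sub>R M) *v y = of_real r *s (M *v (y::'a::real_algebra_1^'n::finite))"
  by (simp add: vec_eq_iff matrix_vector_mult_def sum_distrib_left)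
    (simp add: scaleR_conv_of_real mult.assoc)

lemma norm_matrix_vector_mult_le:
  fixes M :: "'a::real_normed_div_algebra^'n::finite^'m::finite"
  shows "norm (M *v y) \<le> real CARD('m) * real CARD('n) * norm M * norm y"
proof -
  have "norm ((M *v y) $ k) \<le> real CARD('n) * (norm M * norm y)" for k
  proof -
    have "norm ((M *v y) $ k) \<le> (\<Sum>j\<in>UNIV. norm (M $ k $ j * y $ j))"
      unfolding matrix_vector_mult_def by (simp add: norm_sum)
    also have "\<dots> \<le> (\<Sum>j\<in>(UNIV::'n set). norm M * norm y)"
    proof (rule sum_mono)
      fix j
      have "norm (M $ k $ j) \<le> norm M"
        using Finite_Cartesian_Product.norm_nth_le[of "M $ k" j] Finite_Cartesian_Product.norm_nth_le[of M k] by linarith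
      then show "norm (M $ k $ j * y $ j) \<le> norm M * norm y"
        by (simp add: norm_mult mult_mono Finite_Cartesian_Product.norm_nth_le)
    qed
    finally show ?thesis
      by simp
  qed
  then have "(\<Sum>k\<in>UNIV. norm ((M *v y) $ k)) \<le> (\<Sum>k\<in>(UNIV::'m set). real CARD('n) * (norm M * norm y))"
    by (intro sum_mono)
  moreover have "norm (M *v y) \<le> (\<Sum>k\<in>UNIV. norm ((M *v y) $ k))"
    by (simp add: norm_vec_def L2_set_le_sum)
  ultimately show ?thesis
    by (simp add: algebra_simps)
qed

lemma continuous_on_matrix_vector_mult [continuous_intros]:
  fixes M :: "'a::{euclidean_space,real_algebra_1}^'n^'m"
  shows "continuous_on S f \<Longrightarrow> continuous_on S (\<lambda>x. M *v f x)"
  by (rule continuous_on_compose2[OF matrix_vector_mult_linear_continuous_on[of UNIV M]]) auto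

lemma continuous_imp_borel_measurable_lebesgue:
  "continuous_on UNIV (f::real^'n::finite \<Rightarrow> 'b::euclidean_space) \<Longrightarrow> f \<in> borel_measurable lebesgue"
  by (metis measurable_lborel2 borel_measurable_continuous_onI measurable_completion)

lemma borel_measurable_matrix_vector_mult [measurable]:
  fixes f :: "'a \<Rightarrow> complex^'n::finite^'m::finite"
  assumes "f \<in> borel_measurable M" and "g \<in> borel_measurable M"
  shows "(\<lambda>x. f x *v g x) \<in> borel_measurable M"
proof -
  have "continuous_on UNIV (\<lambda>q. fst q *v snd q :: complex^'m)"
    unfolding matrix_vector_mult_def
    by (intro continuous_on_vec_lambda continuous_intros continuous_on_component)
  from borel_measurable_continuous_Pair[OF assms this] show ?thesis
    by simp
qed

lemma borel_measurable_vector_smult [measurable]: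
  fixes f :: "'a \<Rightarrow> complex" and g :: "'a \<Rightarrow> complex^'n::finite"
  assumes "f \<in> borel_measurable M" and "g \<in> borel_measurable M"
  shows "(\<lambda>x. f x *s g x) \<in> borel_measurable M"
proof -
  have "continuous_on UNIV (\<lambda>q. fst q *s snd q :: complex^'n)"
    by (intro continuous_intros)
  from borel_measurable_continuous_Pair[OF assms this] show ?thesis
    by simp
qed

section \<open>Smooth bump functions\<close>

(* bump k is the k-th derivative of t \<mapsto> exp (-1/t), extended by 0 to t \<le> 0. *)

fun bump_poly :: "nat \<Rightarrow> real poly" where
  "bump_poly 0 = 1"
| "bump_poly (Suc k) = [:0, 0, 1:] * (bump_poly k - pderiv (bump_poly k))"

definition bump :: "nat \<Rightarrow> real \<Rightarrow> real" where
  "bump k t = (if t > 0 then poly (bump_poly k) (1 / t) * exp (- 1 / t) else 0)"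

lemma poly_times_exp_neg_tendsto_0: "((\<lambda>y::real. poly q y * exp (- y)) \<longlongrightarrow> 0) at_top"
proof -
  have "(\<lambda>y. poly q y * exp (- y)) = (\<lambda>y. \<Sum>i\<le>degree q. coeff q i * (y ^ i / exp y))"
    by (auto simp: poly_altdef sum_divide_distrib exp_minus field_simps)
  then show ?thesis
    by (simp only:) (intro tendsto_null_sum tendsto_mult_right_zero tendsto_power_div_exp_0)
qed

lemma poly_inverse_times_exp_tendsto_0:
  "((\<lambda>t::real. poly q (1 / t) * exp (- 1 / t)) \<longlongrightarrow> 0) (at_right 0)"
  using filterlim_compose[OF poly_times_exp_neg_tendsto_0 filterlim_inverse_at_top_right]
  by (simp add: divide_inverse minus_divide_left)

lemma bump_eq_0: "t \<le> 0 \<Longrightarrow> bump k t = 0"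
  by (simp add: bump_def)

lemma bump_0_bounds: "0 \<le> bump 0 t \<and> bump 0 t \<le> 1"
  by (simp add: bump_def)

lemma has_real_derivative_bump: "(bump k has_real_derivative bump (Suc k) t) (at t)"
proof (cases t "0::real" rule: linorder_cases)
  case greater
  let ?f = "\<lambda>t. poly (bump_poly k) (1 / t) * exp (- 1 / t)"
  have "(?f has_real_derivative
       poly (pderiv (bump_poly k)) (1 / t) * (- 1 / t\<^sup>2) * exp (- 1 / t)
         + poly (bump_poly k) (1 / t) * (exp (- 1 / t) * (1 / t\<^sup>2))) (at t)"
    using greater by (auto intro!: derivative_eq_intros DERIV_chain2[OF poly_DERIV]
        simp: power2_eq_square field_simps)
  moreover have "poly (pderiv (bump_poly k)) (1 / t) * (- 1 / t\<^sup>2) * exp (- 1 / t)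
         + poly (bump_poly k) (1 / t) * (exp (- 1 / t) * (1 / t\<^sup>2)) = bump (Suc k) t"
    using greater by (simp add: bump_def algebra_simps power2_eq_square)
  ultimately have "(?f has_real_derivative bump (Suc k) t) (at t)"
    by simp
  then show ?thesis
    by (rule has_field_derivative_transform_within_open[where S = "{0<..}"])
      (use greater in \<open>auto simp: bump_def\<close>)
next
  case less
  have "((\<lambda>_. 0) has_real_derivative bump (Suc k) t) (at t)"
    using less by (simp add: bump_def)
  then show ?thesis
    by (rule has_field_derivative_transform_within_open[where S = "{..<0}"])
      (use less in \<open>auto simp: bump_def\<close>)
next
  case equal
  have "((\<lambda>h. (bump k h - bump k 0) / h) \<longlongrightarrow> 0) (at_right 0)"
    using poly_inverse_times_exp_tendsto_0[of "[:0, 1:] * bump_poly k"]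
    by (rule tendsto_cong[THEN iffD1, rotated])
      (auto simp: bump_def eventually_at_right_field intro!: exI[of _ 1])
  moreover have "((\<lambda>h. (bump k h - bump k 0) / h) \<longlongrightarrow> 0) (at_left 0)"
    by (rule tendsto_eventually) (auto simp: bump_def eventually_at_left_field intro!: exI[of _ "-1"])
  ultimately show ?thesis
    using equal by (simp add: has_field_derivative_iff filterlim_split_at bump_def)
qed

definition box_coord :: "real^'n \<Rightarrow> real^'n \<Rightarrow> 'n \<Rightarrow> real^'n \<Rightarrow> real" where
  "box_coord a s i x = (x $ i - a $ i) / s $ i"

(* k i and l i count how often the two factors belonging to coordinate i have been
   differentiated; this makes the family closed under partial derivatives. *)

definition box_bump ::
    "real^'n::finite \<Rightarrow> real^'n \<Rightarrow> ('n \<Rightarrow> nat) \<Rightarrow> ('n \<Rightarrow> nat) \<Rightarrow> real^'n \<Rightarrow> real" where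
  "box_bump a s k l x =
     (\<Prod>i\<in>UNIV. bump (k i) (box_coord a s i x) * bump (l i) (1 - box_coord a s i x))"

lemma has_derivative_box_bump:
  "(box_bump a s k l has_derivative
     (\<lambda>h. \<Sum>j\<in>UNIV. h $ j / s $ j *
        (box_bump a s (k(j := Suc (k j))) l x - box_bump a s k (l(j := Suc (l j))) x))) (at x)"
proof -
  define f where "f i x = bump (k i) (box_coord a s i x) * bump (l i) (1 - box_coord a s i x)" for i x
  define f' where "f' i h = h $ i / s $ i *
      (bump (Suc (k i)) (box_coord a s i x) * bump (l i) (1 - box_coord a s i x)
       - bump (k i) (box_coord a s i x) * bump (Suc (l i)) (1 - box_coord a s i x))" for i h
  have coord: "(box_coord a s i has_derivative (\<lambda>h. h $ i / s $ i)) (at x)" for i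
    unfolding box_coord_def[abs_def] divide_inverse
    by (auto intro!: derivative_eq_intros bounded_linear_imp_has_derivative bounded_linear_vec_nth)
  have "(f i has_derivative f' i) (at x)" for i
    using has_derivative_mult[OF DERIV_compose_FDERIV[OF has_real_derivative_bump coord]
        DERIV_compose_FDERIV[OF has_real_derivative_bump has_derivative_diff[OF has_derivative_const coord]]]
    unfolding f_def[abs_def] f'_def by (simp add: algebra_simps)
  then have "(box_bump a s k l has_derivative (\<lambda>h. \<Sum>i\<in>UNIV. f' i h * (\<Prod>j\<in>UNIV - {i}. f j x))) (at x)"
    unfolding box_bump_def[abs_def] f_def[symmetric] by (rule has_derivative_prod)
  moreover have "f' j h * (\<Prod>i\<in>UNIV - {j}. f i x) = h $ j / s $ j *
      (box_bump a s (k(j := Suc (k j))) l x - box_bump a s k (l(j := Suc (l j))) x)" for j h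
  proof -
    have "box_bump a s (k(j := Suc (k j))) l x = bump (Suc (k j)) (box_coord a s j x) *
        bump (l j) (1 - box_coord a s j x) * (\<Prod>i\<in>UNIV - {j}. f i x)"
     and "box_bump a s k (l(j := Suc (l j))) x = bump (k j) (box_coord a s j x) *
        bump (Suc (l j)) (1 - box_coord a s j x) * (\<Prod>i\<in>UNIV - {j}. f i x)"
      unfolding box_bump_def f_def by (subst prod.remove[of _ j]; auto intro!: prod.cong)+
    then show ?thesis
      by (simp add: f'_def algebra_simps)
  qed
  ultimately show ?thesis
    by simp
qed

lemma partial_deriv_box_bump:
  "partial_deriv (box_bump a s k l) j x =
     (box_bump a s (k(j := Suc (k j))) l x - box_bump a s k (l(j := Suc (l j))) x) / s $ j"
  unfolding partial_deriv_def frechet_derivative_at[OF has_derivative_box_bump, symmetric]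
  by (subst sum.remove[of _ j]) (auto simp: axis_def)

lemma continuous_on_box_bump: "continuous_on S (box_bump a s k l)"
  using has_derivative_box_bump
  by (meson continuous_at_imp_continuous_on has_derivative_continuous)

lemma borel_measurable_box_bump [measurable]: "box_bump a s k l \<in> borel_measurable lebesgue"
  by (rule continuous_imp_borel_measurable_lebesgue[OF continuous_on_box_bump])

lemma box_bump_eq_0:
  assumes "\<forall>i. s $ i > 0" and "x \<notin> box a (a + s)"
  shows "box_bump a s k l x = 0"
proof (rule ccontr)
  assume "box_bump a s k l x \<noteq> 0"
  then have "bump (k i) (box_coord a s i x) \<noteq> 0 \<and> bump (l i) (1 - box_coord a s i x) \<noteq> 0" for i
    by (auto simp: box_bump_def)
  then have "0 < box_coord a s i x \<and> 0 < 1 - box_coord a s i x" for i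
    by (metis bump_eq_0 not_less)
  then show False
    using assms by (auto simp: mem_box_cart box_coord_def field_simps)
qed

abbreviation box_bump0 :: "real^'n::finite \<Rightarrow> real^'n \<Rightarrow> real^'n \<Rightarrow> real" where
  "box_bump0 a s \<equiv> box_bump a s (\<lambda>_. 0) (\<lambda>_. 0)"

lemma box_bump0_bounds: "0 \<le> box_bump0 a s x \<and> box_bump0 a s x \<le> 1"
  using bump_0_bounds unfolding box_bump_def
  by (auto intro!: prod_nonneg prod_le_1 mult_le_one)

lemma box_bump0_ge:
  fixes x :: "real^'n::finite"
  assumes "\<forall>i. s $ i > 0" and "x \<in> cbox (a + (1/4) *\<^sub>R s) (a + (3/4) *\<^sub>R s)"
  shows "exp (-8) ^ CARD('n) \<le> box_bump0 a s x"
proof -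
  have "exp (-8) \<le> bump 0 (box_coord a s i x) * bump 0 (1 - box_coord a s i x)" for i
  proof -
    have y: "1/4 \<le> box_coord a s i x" "box_coord a s i x \<le> 3/4"
      using assms by (auto simp: mem_box_cart box_coord_def field_simps)
    then have "exp (-4) \<le> exp (- 1 / box_coord a s i x)"
      and "exp (-4) \<le> exp (- 1 / (1 - box_coord a s i x))"
      by (auto simp: field_simps)
    then have "exp (-4) * exp (-4) \<le> exp (- 1 / box_coord a s i x) * exp (- 1 / (1 - box_coord a s i x))"
      by (intro mult_mono) auto
    then show ?thesis
      using y by (simp add: bump_def flip: exp_add)
  qed
  then have "(\<Prod>i\<in>(UNIV::'n set). exp (-8)) \<le> box_bump0 a s x"
    unfolding box_bump_def by (intro prod_mono) auto
  then show ?thesis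
    by simp
qed

section \<open>Wave packets\<close>

definition plane_wave :: "real^'n \<Rightarrow> real^'n \<Rightarrow> complex" where
  "plane_wave \<xi> x = exp (\<i> * of_real (\<xi> \<bullet> x))"

lemma norm_plane_wave [simp]: "norm (plane_wave \<xi> x) = 1"
  by (simp add: plane_wave_def norm_exp_i_times)

lemma plane_wave_0 [simp]: "plane_wave 0 x = 1"
  by (simp add: plane_wave_def)

lemma has_derivative_plane_wave:
  "(plane_wave \<xi> has_derivative (\<lambda>h. \<i> * of_real (\<xi> \<bullet> h) * plane_wave \<xi> x)) (at x)"
proof -
  have "((\<lambda>x. \<i> * of_real (\<xi> \<bullet> x)) has_derivative (\<lambda>h. \<i> * of_real (\<xi> \<bullet> h))) (at x)"
    by (auto intro!: derivative_eq_intros)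
  moreover have "(exp has_derivative (*) (plane_wave \<xi> x)) (at (\<i> * of_real (\<xi> \<bullet> x)))"
    using DERIV_exp by (simp add: has_field_derivative_def plane_wave_def)
  ultimately show ?thesis
    by (auto dest: has_derivative_compose simp: mult.commute plane_wave_def[abs_def])
qed

lemma continuous_on_plane_wave [continuous_intros]: "continuous_on S (plane_wave \<xi>)"
  by (meson has_derivative_plane_wave continuous_at_imp_continuous_on has_derivative_continuous)

definition wave_packet :: "real^'n::finite \<Rightarrow> real^'n \<Rightarrow> real^'n \<Rightarrow> ('n \<Rightarrow> nat) \<Rightarrow> ('n \<Rightarrow> nat)
    \<Rightarrow> complex^'N::finite \<Rightarrow> real^'n \<Rightarrow> complex^'N" where
  "wave_packet a s \<xi> k l z x = (plane_wave \<xi> x * of_real (box_bump a s k l x)) *s z"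

lemma has_derivative_wave_packet:
  "(wave_packet a s \<xi> k l z has_derivative
     (\<lambda>h. (\<i> * of_real (\<xi> \<bullet> h) * plane_wave \<xi> x * of_real (box_bump a s k l x)
           + plane_wave \<xi> x * of_real (frechet_derivative (box_bump a s k l) (at x) h)) *s z)) (at x)"
proof -
  have "(box_bump a s k l has_derivative frechet_derivative (box_bump a s k l) (at x)) (at x)"
    using has_derivative_box_bump frechet_derivative_works differentiable_def by blast
  from has_derivative_mult[OF has_derivative_plane_wave has_derivative_of_real[OF this]]
  have "((\<lambda>x. plane_wave \<xi> x * of_real (box_bump a s k l x)) has_derivative
     (\<lambda>h. \<i> * of_real (\<xi> \<bullet> h) * plane_wave \<xi> x * of_real (box_bump a s k l x)
           + plane_wave \<xi> x * of_real (frechet_derivative (box_bump a s k l) (at x) h))) (at x)"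
    by (simp add: algebra_simps)
  from has_derivative_vector_smult[OF this has_derivative_const[of z]] show ?thesis
    by (simp add: wave_packet_def[abs_def])
qed

lemma partial_deriv_wave_packet:
  "partial_deriv (wave_packet a s \<xi> k l z) j x =
     wave_packet a s \<xi> k l ((\<i> * of_real (\<xi> $ j)) *s z) x
     + wave_packet a s \<xi> (k(j := Suc (k j))) l (of_real (1 / s $ j) *s z) x
     + wave_packet a s \<xi> k (l(j := Suc (l j))) (of_real (- 1 / s $ j) *s z) x"
  unfolding partial_deriv_def frechet_derivative_at[OF has_derivative_wave_packet, symmetric]
  by (simp add: partial_deriv_box_bump[unfolded partial_deriv_def] wave_packet_def vec_eq_iff
      inner_axis algebra_simps diff_divide_distrib)

lemma differentiable_wave_packet: "wave_packet a s \<xi> k l z differentiable (at x)"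
  using has_derivative_wave_packet differentiable_def by blast

lemma partial_deriv_add:
  assumes "f differentiable (at x)" and "g differentiable (at x)"
  shows "partial_deriv (\<lambda>x. f x + g x) j x = partial_deriv f j x + partial_deriv g j x"
proof -
  have "((\<lambda>x. f x + g x) has_derivative
      (\<lambda>h. frechet_derivative f (at x) h + frechet_derivative g (at x) h)) (at x)"
    using assms by (intro has_derivative_add) (simp_all add: frechet_derivative_works)
  then show ?thesis
    by (simp add: partial_deriv_def frechet_derivative_at[symmetric])
qed

inductive wave_packet_sum :: "real^'n::finite \<Rightarrow> real^'n \<Rightarrow> real^'n \<Rightarrow> (real^'n \<Rightarrow> complex^'N::finite) \<Rightarrow> bool"
  for a s \<xi> where
  wave_packet: "wave_packet_sum a s \<xi> (wave_packet a s \<xi> k l z)"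
| add: "wave_packet_sum a s \<xi> f \<Longrightarrow> wave_packet_sum a s \<xi> g \<Longrightarrow> wave_packet_sum a s \<xi> (\<lambda>x. f x + g x)"

lemma wave_packet_sum_differentiable_partial_deriv:
  assumes "wave_packet_sum a s \<xi> f"
  shows "(\<forall>x. f differentiable (at x)) \<and> (\<forall>j. wave_packet_sum a s \<xi> (partial_deriv f j))"
  using assms
proof induction
  case (wave_packet k l z)
  show ?case
    by (simp add: differentiable_wave_packet partial_deriv_wave_packet wave_packet_sum.intros)
next
  case (add f g)
  then show ?case
    by (simp add: partial_deriv_add wave_packet_sum.add differentiable_add)
qed

lemma smooth_fun_wave_packet_sum: "wave_packet_sum a s \<xi> f \<Longrightarrow> smooth_fun f"
  by (coinduction arbitrary: f rule: smooth_fun.coinduct)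
    (use wave_packet_sum_differentiable_partial_deriv in blast)

lemma test_fun_wave_packet:
  assumes "\<forall>i. s $ i > 0"
  shows "test_fun (wave_packet a s \<xi> k l z)"
  unfolding test_fun_def
proof
  show "smooth_fun (wave_packet a s \<xi> k l z)"
    by (rule smooth_fun_wave_packet_sum[OF wave_packet_sum.wave_packet])
  have "{x. wave_packet a s \<xi> k l z x \<noteq> 0} \<subseteq> cbox a (a + s)"
    using box_bump_eq_0[OF assms] box_subset_cbox by (force simp: wave_packet_def)
  then have "closure {x. wave_packet a s \<xi> k l z x \<noteq> 0} \<subseteq> cbox a (a + s)"
    by (rule closure_minimal) (simp add: closed_cbox)
  then show "compact (closure {x. wave_packet a s \<xi> k l z x \<noteq> 0})"
    by (meson bounded_cbox bounded_subset closed_closure compact_eq_bounded_closed)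
qed

lemma symbol_mult_vector: "symbol Dh \<xi> *v v = (\<Sum>j\<in>UNIV. of_real (\<xi> $ j) *s (Dh j *v v))"
  by (simp add: symbol_def matrix_vector_mult_sum_left scaleR_matrix_vector_mult)

lemma symbol_scaleR: "symbol Dh (r *\<^sub>R \<xi>) = r *\<^sub>R symbol Dh \<xi>"
  by (simp add: symbol_def scaleR_sum_right)

lemma partial_deriv_wave_packet_factor:
  "partial_deriv (wave_packet a s \<xi> k l z) j x = plane_wave \<xi> x *s
     ((\<i> * of_real (\<xi> $ j) * of_real (box_bump a s k l x)) *s z + partial_deriv (wave_packet a s 0 k l z) j x)"
  by (simp add: partial_deriv_wave_packet wave_packet_def vec_eq_iff algebra_simps)

lemma diff_op_wave_packet:
  "diff_op Dh (wave_packet a s \<xi> k l v) x = plane_wave \<xi> x *s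
     (of_real (box_bump a s k l x) *s (symbol Dh \<xi> *v v) + diff_op Dh (wave_packet a s 0 k l v) x)"
  unfolding diff_op_def partial_deriv_wave_packet_factor[of a s \<xi>] symbol_mult_vector
  by (simp add: vec_eq_iff vector_scalar_commute matrix_vector_right_distrib sum_component
      sum_distrib_left sum.distrib sum_negf algebra_simps)

lemma continuous_on_diff_op_wave_packet: "continuous_on S (diff_op Dh (wave_packet a s \<xi> k l v))"
  unfolding diff_op_def[abs_def] partial_deriv_wave_packet wave_packet_def
  by (intro continuous_intros continuous_on_box_bump)

lemma diff_op_wave_packet_eq_0:
  assumes "\<forall>i. s $ i > 0" and "x \<notin> cbox a (a + s)"
  shows "diff_op Dh (wave_packet a s \<xi> k l v) x = 0"
proof -
  have "x \<notin> box a (a + s)"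
    using assms(2) box_subset_cbox by blast
  then show ?thesis
    by (simp add: diff_op_def partial_deriv_wave_packet wave_packet_def box_bump_eq_0[OF assms(1)])
qed

lemma bounded_diff_op_wave_packet:
  assumes "\<forall>i. s $ i > 0"
  obtains B where "\<And>x. norm (diff_op Dh (wave_packet a s \<xi> k l v) x) \<le> B"
proof -
  have "bounded (diff_op Dh (wave_packet a s \<xi> k l v) ` cbox a (a + s))"
    by (intro compact_imp_bounded compact_continuous_image continuous_on_diff_op_wave_packet) auto
  then obtain B where "\<forall>y \<in> diff_op Dh (wave_packet a s \<xi> k l v) ` cbox a (a + s). norm y \<le> B"
    by (auto simp: bounded_iff)
  then show ?thesis
    using diff_op_wave_packet_eq_0[OF assms] by (intro that[of "max B 0"]) (fastforce simp: le_max_iff_disj)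
qed

lemma Lp_norm_eq_scale:
  assumes "p > 0" and "r \<ge> 0" and "\<And>x. norm (F x) = r * norm (G x)"
  shows "Lp_norm p F = r * Lp_norm p G"
proof -
  have "(\<integral>x. norm (F x) powr p \<partial>lebesgue) = r powr p * (\<integral>x. norm (G x) powr p \<partial>lebesgue)"
    using assms by (simp add: powr_mult)
  then show ?thesis
    using assms(1,2) by (simp add: Lp_norm_def powr_mult powr_powr integral_nonneg_AE)
qed

lemma integral_powr_le_of_Lp_norm_le:
  assumes "p > 0" and "c \<ge> 0" and "c * Lp_norm p F \<le> Lp_norm p G"
  shows "c powr p * (\<integral>x. norm (F x) powr p \<partial>lebesgue) \<le> (\<integral>x. norm (G x) powr p \<partial>lebesgue)"
proof -
  have "(c * Lp_norm p F) powr p \<le> Lp_norm p G powr p"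
    using assms by (intro powr_mono2) (auto simp: Lp_norm_def)
  then show ?thesis
    using assms(1,2) by (simp add: Lp_norm_def powr_mult powr_powr integral_nonneg_AE)
qed

lemma integrable_bounded_vanishing_outside:
  fixes f :: "'a \<Rightarrow> real"
  assumes "f \<in> borel_measurable M" and "AE x in M. norm (f x) \<le> B"
    and "\<And>x. x \<notin> K \<Longrightarrow> f x = 0" and "K \<in> sets M" and "emeasure M K < \<infinity>"
  shows "integrable M f"
proof (rule Bochner_Integration.integrable_bound)
  show "integrable M (\<lambda>x. max B 0 * indicator K x)"
    using assms(4,5) by (intro integrable_mult_right integrable_real_indicator)
  show "AE x in M. norm (f x) \<le> norm (max B 0 * indicator K x :: real)"
    using assms(2) by eventually_elim (use assms(3) in \<open>auto simp: indicator_def\<close>)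
qed (rule assms(1))

lemma tendsto_integral_norm_powr:
  fixes G :: "nat \<Rightarrow> 'a \<Rightarrow> 'b::{banach, second_countable_topology}"
  assumes "\<And>k. G k \<in> borel_measurable M" and "H \<in> borel_measurable M"
    and "AE x in M. (\<lambda>k. G k x) \<longlonglongrightarrow> H x" and "\<And>k. AE x in M. norm (G k x) \<le> B"
    and "\<And>k x. x \<notin> K \<Longrightarrow> G k x = 0" and "K \<in> sets M" and "emeasure M K < \<infinity>" and "p > 0"
  shows "(\<lambda>k. \<integral>x. norm (G k x) powr p \<partial>M) \<longlonglongrightarrow> (\<integral>x. norm (H x) powr p \<partial>M)"
proof (rule integral_dominated_convergence)
  show "integrable M (\<lambda>x. max B 0 powr p * indicator K x)"
    using assms(6,7) by (intro integrable_mult_right integrable_real_indicator)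
  show "AE x in M. norm (norm (G k x) powr p) \<le> max B 0 powr p * indicator K x" for k
    using assms(4)[of k]
    by eventually_elim (use assms(5,8) in \<open>auto simp: indicator_def intro!: powr_mono2\<close>)
  show "AE x in M. (\<lambda>k. norm (G k x) powr p) \<longlonglongrightarrow> norm (H x) powr p"
    using assms(3) by eventually_elim (use assms(8) in \<open>auto intro!: tendsto_intros\<close>)
qed (use assms(1,2) in measurable)

lemma tendsto_integral_norm_powr_perturbed:
  fixes F R :: "'a \<Rightarrow> complex^'N::finite" and A :: "'a \<Rightarrow> complex^'N^'K::finite"
  assumes [measurable]: "F \<in> borel_measurable M" "R \<in> borel_measurable M" "A \<in> borel_measurable M"
    and "\<And>x. norm (F x) \<le> B" and "\<And>x. norm (R x) \<le> B"
    and "\<And>x. x \<notin> K \<Longrightarrow> F x = 0 \<and> R x = 0" and "K \<in> sets M" and "emeasure M K < \<infinity>"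
    and A: "AE x in M. \<forall>y. norm (A x *v y) \<le> C * norm y" and "p > 0" and "C \<ge> 0"
  shows "(\<lambda>k. \<integral>x. norm (A x *v (F x + of_real (1 / real (Suc k)) *s R x)) powr p \<partial>M)
      \<longlonglongrightarrow> (\<integral>x. norm (A x *v F x) powr p \<partial>M)"
proof (rule tendsto_integral_norm_powr[where B = "C * (B + B)" and K = K])
  have "norm (of_real (1 / real (Suc k)) *s R x) \<le> B" for k x
  proof -
    have "\<bar>1 / real (Suc k)\<bar> * norm (R x) \<le> 1 * B"
      using assms(5)[of x] by (intro mult_mono) auto
    then show ?thesis
      by (simp only: norm_vector_smult norm_of_real)
  qed
  then have bound: "norm (F x + of_real (1 / real (Suc k)) *s R x) \<le> B + B" for k x
    using assms(4)[of x] by (intro order.trans[OF norm_triangle_ineq] add_mono)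
  show "AE x in M. norm (A x *v (F x + of_real (1 / real (Suc k)) *s R x)) \<le> C * (B + B)" for k
    using A by eventually_elim (meson \<open>C \<ge> 0\<close> bound mult_left_mono order.trans)
  have "(\<lambda>k. of_real (1 / real (Suc k)) :: complex) \<longlonglongrightarrow> of_real 0"
    using tendsto_of_real[OF LIMSEQ_inverse_real_of_nat] by (simp only: inverse_eq_divide)
  from tendsto_add[OF tendsto_const tendsto_vector_smult[OF this tendsto_const]]
  have "(\<lambda>k. F x + of_real (1 / real (Suc k)) *s R x) \<longlonglongrightarrow> F x" for x
    by simp
  then show "AE x in M. (\<lambda>k. A x *v (F x + of_real (1 / real (Suc k)) *s R x)) \<longlonglongrightarrow> A x *v F x"
    by (intro AE_I2 isCont_tendsto_compose[OF matrix_vector_mult_linear_continuous_at])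
qed (use assms in auto)

lemma Linfty_matrix_vector_mult_bound:
  fixes A :: "real^'n::finite \<Rightarrow> complex^'M::finite^'K::finite"
  assumes "Linfty A"
  obtains C where "C \<ge> 0" and "AE x in lebesgue. \<forall>y. norm (A x *v y) \<le> C * norm y"
proof -
  obtain B where B: "AE x in lebesgue. norm (A x) \<le> B"
    using assms by (auto simp: Linfty_def)
  define C where "C = real CARD('K) * real CARD('M) * max B 0"
  have "AE x in lebesgue. \<forall>y. norm (A x *v y) \<le> C * norm y"
    using B
  proof eventually_elim
    case (elim x)
    show ?case
    proof
      fix y
      have "norm (A x *v y) \<le> real CARD('K) * real CARD('M) * norm (A x) * norm y"
        by (rule norm_matrix_vector_mult_le)
      also have "\<dots> \<le> C * norm y"
        using elim by (auto simp: C_def intro!: mult_right_mono mult_left_mono)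
      finally show "norm (A x *v y) \<le> C * norm y" .
    qed
  qed
  then show ?thesis
    by (intro that[of C]) (auto simp: C_def)
qed

section \<open>Boxes of almost full density\<close>

lemma negligible_Int_cbox:
  assumes "interior (cbox p q) \<inter> interior (cbox p' q') = {}"
  shows "negligible (cbox p q \<inter> cbox p' (q'::real^'n::finite))"
proof (rule negligible_subset)
  show "cbox p q \<inter> cbox p' q' \<subseteq> (cbox p q - box p q) \<union> (cbox p' q' - box p' q')"
    using assms by (auto simp: interior_cbox)
qed (intro negligible_Un negligible_frontier_interval)

lemma measure_Union_Diff_ge:
  assumes "finite \<D>" and meas: "\<And>K. K \<in> \<D> \<Longrightarrow> K \<in> lmeasurable"
    and disj: "pairwise (\<lambda>K K'. negligible (K \<inter> K')) \<D>" and S: "S \<in> sets lebesgue"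
    and ge: "\<And>K. K \<in> \<D> \<Longrightarrow> \<epsilon> * measure lebesgue K \<le> measure lebesgue (K - S)"
  shows "\<epsilon> * measure lebesgue (\<Union>\<D>) \<le> measure lebesgue (\<Union>\<D> - S)"
proof -
  have "K - S \<in> lmeasurable" if "K \<in> \<D>" for K
    using meas[OF that] S by (intro fmeasurableI2[OF meas[OF that] Diff_subset] sets.Diff) auto
  moreover have "pairwise (\<lambda>K K'. negligible ((K - S) \<inter> (K' - S))) \<D>"
    using disj unfolding pairwise_def by (meson Diff_subset Int_mono negligible_subset)
  ultimately have "measure lebesgue (\<Union>K\<in>\<D>. K - S) = (\<Sum>K\<in>\<D>. measure lebesgue (K - S))"
    by (rule measure_negligible_finite_Union_image[OF \<open>finite \<D>\<close>])
  moreover have "measure lebesgue (\<Union>\<D>) = (\<Sum>K\<in>\<D>. measure lebesgue K)"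
    by (rule measure_negligible_finite_Union[OF \<open>finite \<D>\<close> meas disj])
  moreover have "(\<Union>K\<in>\<D>. K - S) = \<Union>\<D> - S"
    by blast
  ultimately show ?thesis
    using ge by (simp add: sum_distrib_left sum_mono)
qed

lemma finite_boxes_approximating_from_outside:
  fixes S :: "(real^'n::finite) set"
  assumes S: "S \<in> lmeasurable" "S \<subseteq> cbox a b" and "box a b \<noteq> {}" and "\<eta> > 0"
  obtains \<D> where "finite \<D>" and "\<And>K. K \<in> \<D> \<Longrightarrow> \<exists>c d. (\<forall>i. c $ i < d $ i) \<and> K = cbox c d"
    and "pairwise (\<lambda>K K'. negligible (K \<inter> K')) \<D>"
    and "measure lebesgue (\<Union>\<D> - S) \<le> \<eta>" and "measure lebesgue S - \<eta> < measure lebesgue (\<Union>\<D>)"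
proof -
  obtain \<D> where countable: "countable \<D>"
    and boxes: "\<And>K. K \<in> \<D> \<Longrightarrow> K \<subseteq> cbox a b \<and> K \<noteq> {} \<and> (\<exists>c d. K = cbox c d)"
    and disjoint: "pairwise (\<lambda>A B. interior A \<inter> interior B = {}) \<D>"
    and nonflat: "\<And>K. K \<in> \<D> \<Longrightarrow> interior K \<noteq> {}"
    and cover: "S \<subseteq> \<Union>\<D>" and D_meas: "\<Union>\<D> \<in> lmeasurable"
    and D_small: "measure lebesgue (\<Union>\<D>) \<le> measure lebesgue S + \<eta>"
    using measurable_outer_intervals_bounded[OF S \<open>\<eta> > 0\<close>] \<open>box a b \<noteq> {}\<close> by metis
  have K_meas: "K \<in> lmeasurable" if "K \<in> \<D>" for K
    using boxes[OF that] by auto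
  have "measure lebesgue (\<Union>\<D>') \<le> measure lebesgue (\<Union>\<D>)" if "\<D>' \<subseteq> \<D>" "finite \<D>'" for \<D>'
    using that K_meas by (intro measure_mono_fmeasurable[OF _ _ D_meas]) auto
  then obtain \<D>' where "\<D>' \<subseteq> \<D>" and "finite \<D>'"
    and approx: "measure lebesgue (\<Union>\<D>) - \<eta> < measure lebesgue (\<Union>\<D>')"
    using measure_countable_Union_approachable[OF countable \<open>\<eta> > 0\<close> K_meas] by blast
  show ?thesis
  proof (rule that[OF \<open>finite \<D>'\<close>])
    show "\<exists>c d. (\<forall>i. c $ i < d $ i) \<and> K = cbox c d" if "K \<in> \<D>'" for K
      using boxes nonflat that \<open>\<D>' \<subseteq> \<D>\<close>
      by (metis interior_cbox interval_ne_empty_cart(2) subsetD)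
    show "pairwise (\<lambda>K K'. negligible (K \<inter> K')) \<D>'"
    proof (intro pairwiseI)
      fix K K' assume "K \<in> \<D>'" "K' \<in> \<D>'" "K \<noteq> K'"
      then obtain c d c' d' where "K = cbox c d" "K' = cbox c' d'"
        and "interior K \<inter> interior K' = {}"
        using \<open>\<D>' \<subseteq> \<D>\<close> boxes disjoint unfolding pairwise_def by (metis subsetD)
      then show "negligible (K \<inter> K')"
        by (simp add: negligible_Int_cbox)
    qed
    have "measure lebesgue (\<Union>\<D>' - S) \<le> measure lebesgue (\<Union>\<D> - S)"
    proof (rule measure_mono_fmeasurable)
      have "\<Union>\<D>' \<in> lmeasurable"
        using \<open>finite \<D>'\<close> \<open>\<D>' \<subseteq> \<D>\<close> K_meas by (intro fmeasurable.finite_Union) auto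
      then show "\<Union>\<D>' - S \<in> sets lebesgue"
        using S by auto
      show "\<Union>\<D>' - S \<subseteq> \<Union>\<D> - S"
        using \<open>\<D>' \<subseteq> \<D>\<close> by blast
      show "\<Union>\<D> - S \<in> lmeasurable"
        using D_meas S by (intro fmeasurable_Diff) auto
    qed
    also have "\<dots> = measure lebesgue (\<Union>\<D>) - measure lebesgue S"
      by (rule measurable_measure_Diff[OF D_meas _ cover]) (use S in auto)
    finally show "measure lebesgue (\<Union>\<D>' - S) \<le> \<eta>"
      using D_small by simp
    have "measure lebesgue S \<le> measure lebesgue (\<Union>\<D>)"
      by (rule measure_mono_fmeasurable[OF cover _ D_meas]) (use S in auto)
    then show "measure lebesgue S - \<eta> < measure lebesgue (\<Union>\<D>')"
      using approx by simp
  qed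
qed

lemma lmeasurable_density_box:
  fixes S :: "(real^'n::finite) set"
  assumes S: "S \<in> lmeasurable" "S \<subseteq> cbox a b" and "box a b \<noteq> {}"
    and m: "measure lebesgue S > 0" and \<epsilon>: "\<epsilon> > 0"
  shows "\<exists>p q. (\<forall>i. p $ i < q $ i) \<and> measure lebesgue (cbox p q - S) < \<epsilon> * measure lebesgue (cbox p q)"
proof (rule ccontr)
  assume contra: "\<not> ?thesis"
  define m where "m = measure lebesgue S"
  have "min (m / 2) (\<epsilon> * m / 4) > 0"
    using m \<epsilon> by (simp add: m_def)
  then obtain \<D> where "finite \<D>" and boxes: "\<And>K. K \<in> \<D> \<Longrightarrow> \<exists>c d. (\<forall>i. c $ i < d $ i) \<and> K = cbox c d"
    and disjoint: "pairwise (\<lambda>K K'. negligible (K \<inter> K')) \<D>"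
    and outside: "measure lebesgue (\<Union>\<D> - S) \<le> min (m / 2) (\<epsilon> * m / 4)"
    and large: "m - min (m / 2) (\<epsilon> * m / 4) < measure lebesgue (\<Union>\<D>)"
    using finite_boxes_approximating_from_outside[OF S \<open>box a b \<noteq> {}\<close>] unfolding m_def by metis
  have "\<epsilon> * measure lebesgue K \<le> measure lebesgue (K - S)" if "K \<in> \<D>" for K
    using boxes[OF that] contra by (meson not_le)
  then have "\<epsilon> * measure lebesgue (\<Union>\<D>) \<le> measure lebesgue (\<Union>\<D> - S)"
    using \<open>finite \<D>\<close> disjoint S boxes by (intro measure_Union_Diff_ge) auto
  also have "\<dots> \<le> \<epsilon> * (m / 4)"
    using outside by simp
  finally have "measure lebesgue (\<Union>\<D>) \<le> m / 4"
    using \<epsilon> by simp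
  then show False
    using large m by (simp add: m_def)
qed

lemma lebesgue_density_box:
  fixes E :: "(real^'n::finite) set"
  assumes E: "E \<in> sets lebesgue" "emeasure lebesgue E \<noteq> 0" and "\<epsilon> > 0"
  shows "\<exists>p q. (\<forall>i. p $ i < q $ i) \<and> measure lebesgue (cbox p q - E) < \<epsilon> * measure lebesgue (cbox p q)"
proof -
  define C where "C k = cbox (vec (- real (Suc k))) (vec (real (Suc k)) :: real^'n)" for k
  have "(\<Union>k. E \<inter> C k) = E"
  proof (intro equalityI subsetI)
    fix x :: "real^'n"
    assume "x \<in> E"
    obtain k :: nat where "norm x \<le> real k"
      using real_arch_simple by blast
    then have "- real (Suc k) \<le> x $ i \<and> x $ i \<le> real (Suc k)" for i
      using component_le_norm_cart[of x i] by linarith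
    then have "x \<in> C k"
      by (simp add: C_def mem_box_cart)
    with \<open>x \<in> E\<close> show "x \<in> (\<Union>k. E \<inter> C k)"
      by blast
  qed auto
  moreover have "emeasure lebesgue (\<Union>k. E \<inter> C k) = 0" if "\<forall>k. emeasure lebesgue (E \<inter> C k) = 0"
    using that E by (intro emeasure_UN_eq_0) (auto simp: C_def)
  ultimately obtain k where "emeasure lebesgue (E \<inter> C k) \<noteq> 0"
    using E by auto
  moreover have "E \<inter> C k \<in> lmeasurable"
    using E by (intro fmeasurableI2[of "C k" _ "E \<inter> C k"]) (auto simp: C_def)
  ultimately have "measure lebesgue (E \<inter> C k) > 0"
    by (simp add: emeasure_eq_measure2 zero_less_measure_iff)
  then obtain p q where "\<forall>i. p $ i < q $ i"
    and "measure lebesgue (cbox p q - E \<inter> C k) < \<epsilon> * measure lebesgue (cbox p q)"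
    using lmeasurable_density_box[OF \<open>E \<inter> C k \<in> lmeasurable\<close> _ _ _ \<open>\<epsilon> > 0\<close>]
    by (fastforce simp: C_def interval_ne_empty_cart)
  moreover have "measure lebesgue (cbox p q - E) \<le> measure lebesgue (cbox p q - E \<inter> C k)"
    using E \<open>E \<inter> C k \<in> lmeasurable\<close> by (intro measure_mono_fmeasurable fmeasurable_Diff) auto
  ultimately show ?thesis
    by force
qed

section \<open>Functions with nonnegative integrals against box weights\<close>

context
  fixes \<psi> :: "real^'n::finite \<Rightarrow> real^'n \<Rightarrow> real^'n \<Rightarrow> real" and \<delta> :: real
  assumes \<psi>_meas: "\<And>a s. \<psi> a s \<in> borel_measurable lebesgue"
    and \<psi>_bounds: "\<And>a s x. 0 \<le> \<psi> a s x \<and> \<psi> a s x \<le> 1"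
    and \<psi>_eq_0: "\<And>a s x. \<forall>i. s $ i > 0 \<Longrightarrow> x \<notin> cbox a (a + s) \<Longrightarrow> \<psi> a s x = 0"
    and \<delta>: "\<delta> > 0"
    and \<psi>_ge: "\<And>a s x. \<forall>i. s $ i > 0 \<Longrightarrow> x \<in> cbox (a + (1/4) *\<^sub>R s) (a + (3/4) *\<^sub>R s) \<Longrightarrow> \<delta> \<le> \<psi> a s x"
begin

lemma integral_weight_ge:
  assumes s: "\<forall>i. s $ i > 0"
  shows "\<delta> * measure lebesgue (cbox a (a + s)) / 2 ^ CARD('n) \<le> (\<integral>x. \<psi> a s x \<partial>lebesgue)"
proof -
  define Q' where "Q' = cbox (a + (1/4) *\<^sub>R s) (a + (3/4) *\<^sub>R s)"
  have "measure lebesgue Q' = (\<Prod>i\<in>UNIV. s $ i / 2)"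
    using s by (simp add: Q'_def content_cbox_cart interval_ne_empty_cart less_imp_le)
  also have "\<dots> = measure lebesgue (cbox a (a + s)) / 2 ^ CARD('n)"
    using s by (simp add: content_cbox_cart interval_ne_empty_cart less_imp_le prod_dividef)
  finally have "\<delta> * measure lebesgue (cbox a (a + s)) / 2 ^ CARD('n) = (\<integral>x. \<delta> * indicator Q' x \<partial>lebesgue)"
    by simp
  also have "\<dots> \<le> (\<integral>x. \<psi> a s x \<partial>lebesgue)"
  proof (rule integral_mono)
    show "integrable lebesgue (\<psi> a s)"
      using \<psi>_bounds \<psi>_eq_0[OF s] lmeasurable_cbox[of a "a + s"]
      by (intro integrable_bounded_vanishing_outside[where B = 1 and K = "cbox a (a + s)"] \<psi>_meas)
        (auto simp: fmeasurable_def)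
    show "\<delta> * indicator Q' x \<le> \<psi> a s x" for x
      using \<psi>_bounds \<psi>_ge[OF s] by (auto simp: Q'_def indicator_def)
  qed (use lmeasurable_cbox in \<open>auto simp: Q'_def fmeasurable_def intro!: integrable_real_indicator\<close>)
  finally show ?thesis .
qed

lemma weighted_integral_le:
  assumes s: "\<forall>i. s $ i > 0"
    and f: "f \<in> borel_measurable lebesgue" and X: "AE x in lebesgue. \<bar>f x\<bar> \<le> X"
    and E: "E \<in> sets lebesgue" and "\<gamma> \<ge> 0" and f_E: "\<And>x. x \<in> E \<Longrightarrow> f x \<le> - \<gamma>"
  shows "(\<integral>x. \<psi> a s x * f x \<partial>lebesgue)
    \<le> - \<gamma> * (\<integral>x. \<psi> a s x \<partial>lebesgue) + (max X 0 + \<gamma>) * measure lebesgue (cbox a (a + s) - E)"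
proof -
  define Q where "Q = cbox a (a + s)"
  have Q: "Q \<in> sets lebesgue" "emeasure lebesgue Q < \<infinity>"
    using lmeasurable_cbox by (auto simp: Q_def fmeasurable_def)
  have QE: "Q - E \<in> lmeasurable"
    unfolding Q_def by (rule fmeasurable_Diff[OF lmeasurable_cbox E])
  have \<psi>_Q: "x \<notin> Q \<Longrightarrow> \<psi> a s x = 0" for x
    using \<psi>_eq_0[OF s] by (simp add: Q_def)
  have \<psi>_int: "integrable lebesgue (\<psi> a s)"
    using \<psi>_bounds \<psi>_Q Q by (intro integrable_bounded_vanishing_outside[where B = 1] \<psi>_meas) auto
  have \<psi>f_bound: "\<psi> a s x * f x \<le> max X 0" "norm (\<psi> a s x * f x) \<le> max X 0" if "\<bar>f x\<bar> \<le> X" for x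
  proof -
    have "\<psi> a s x * \<bar>f x\<bar> \<le> 1 * max X 0"
      using that \<psi>_bounds[of a s x] by (intro mult_mono) auto
    then show "\<psi> a s x * f x \<le> max X 0" "norm (\<psi> a s x * f x) \<le> max X 0"
      using \<psi>_bounds[of a s x] by (auto simp: abs_mult intro: order.trans[OF mult_left_mono[OF abs_ge_self]])
  qed
  have \<psi>f_int: "integrable lebesgue (\<lambda>x. \<psi> a s x * f x)"
    using X \<psi>f_bound(2) \<psi>_Q Q f \<psi>_meas
    by (intro integrable_bounded_vanishing_outside[where B = "max X 0" and K = Q]) (auto elim!: eventually_mono)
  have "AE x in lebesgue. \<psi> a s x * f x \<le> - \<gamma> * \<psi> a s x + (max X 0 + \<gamma>) * indicator (Q - E) x"
    using X
  proof eventually_elim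
    case (elim x)
    have "\<gamma> * \<psi> a s x \<le> \<gamma>"
      using \<psi>_bounds[of a s x] \<open>\<gamma> \<ge> 0\<close> by (intro mult_right_le_one_le) auto
    moreover have "x \<in> E \<Longrightarrow> \<psi> a s x * f x \<le> \<psi> a s x * (- \<gamma>)"
      using \<psi>_bounds[of a s x] f_E by (intro mult_left_mono) auto
    ultimately show ?case
      using \<psi>_Q[of x] \<psi>f_bound(1)[OF elim] by (cases "x \<in> E") (auto simp: indicator_def mult.commute)
  qed
  then have "(\<integral>x. \<psi> a s x * f x \<partial>lebesgue)
      \<le> (\<integral>x. - \<gamma> * \<psi> a s x + (max X 0 + \<gamma>) * indicator (Q - E) x \<partial>lebesgue)"
    using \<psi>_int QE by (intro integral_mono_AE[OF \<psi>f_int]) (auto simp: fmeasurable_def)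
  also have "\<dots> = - \<gamma> * (\<integral>x. \<psi> a s x \<partial>lebesgue) + (max X 0 + \<gamma>) * measure lebesgue (Q - E)"
    using \<psi>_int QE
    by (subst Bochner_Integration.integral_add) (auto simp: fmeasurable_def integrable_real_indicator)
  finally show ?thesis
    by (simp add: Q_def)
qed

lemma AE_ge_of_weighted_integrals_nonneg:
  assumes f: "f \<in> borel_measurable lebesgue" and X: "AE x in lebesgue. \<bar>f x\<bar> \<le> X"
    and nonneg: "\<And>a s. \<forall>i. s $ i > 0 \<Longrightarrow> 0 \<le> (\<integral>x. \<psi> a s x * f x \<partial>lebesgue)"
    and "\<gamma> > 0"
  shows "AE x in lebesgue. - \<gamma> \<le> f x"
proof -
  define E where "E = {x. f x < - \<gamma>}"
  have E: "E \<in> sets lebesgue"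
  proof -
    have "{x \<in> space lebesgue. f x < - \<gamma>} \<in> sets lebesgue"
      using f by measurable
    then show ?thesis
      by (simp add: E_def)
  qed
  have "emeasure lebesgue E = 0"
  proof (rule ccontr)
    assume "emeasure lebesgue E \<noteq> 0"
    define Y where "Y = max X 0 + \<gamma>"
    \<comment> \<open>chosen so that \<open>Y \<epsilon> |Q|\<close> equals the lower bound \<open>\<gamma> \<delta> |Q| / 2^n\<close> of \<open>\<gamma> \<integral> \<psi>\<close>\<close>
    define \<epsilon> where "\<epsilon> = \<gamma> * \<delta> / 2 ^ CARD('n) / Y"
    have Y: "Y > 0" and \<epsilon>: "\<epsilon> > 0"
      using \<open>\<gamma> > 0\<close> \<delta> by (auto simp: Y_def \<epsilon>_def)
    obtain a b where ab: "\<forall>i. a $ i < b $ i"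
      and small: "measure lebesgue (cbox a b - E) < \<epsilon> * measure lebesgue (cbox a b)"
      using lebesgue_density_box[OF E \<open>emeasure lebesgue E \<noteq> 0\<close> \<epsilon>] by blast
    define s where "s = b - a"
    have s: "\<forall>i. s $ i > 0" and b: "a + s = b"
      using ab by (auto simp: s_def)
    have "0 \<le> (\<integral>x. \<psi> a s x * f x \<partial>lebesgue)"
      by (rule nonneg[OF s])
    also have "\<dots> \<le> - \<gamma> * (\<integral>x. \<psi> a s x \<partial>lebesgue) + Y * measure lebesgue (cbox a b - E)"
      using weighted_integral_le[OF s f X E less_imp_le[OF \<open>\<gamma> > 0\<close>], of a] by (simp add: b Y_def E_def)
    also have "\<dots> < - \<gamma> * (\<integral>x. \<psi> a s x \<partial>lebesgue) + Y * (\<epsilon> * measure lebesgue (cbox a b))"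
      using small Y by simp
    also have "\<dots> \<le> 0"
      using integral_weight_ge[OF s, of a] \<open>\<gamma> > 0\<close> Y by (simp add: b \<epsilon>_def field_simps)
    finally show False
      by simp
  qed
  then show ?thesis
    using E by (intro AE_I[where N = E]) (auto simp: E_def)
qed

lemma AE_nonneg_of_weighted_integrals_nonneg:
  assumes f: "f \<in> borel_measurable lebesgue" and X: "AE x in lebesgue. \<bar>f x\<bar> \<le> X"
    and nonneg: "\<And>a s. \<forall>i. s $ i > 0 \<Longrightarrow> 0 \<le> (\<integral>x. \<psi> a s x * f x \<partial>lebesgue)"
  shows "AE x in lebesgue. 0 \<le> f x"
proof -
  have "AE x in lebesgue. \<forall>k. - inverse (real (Suc k)) \<le> f x"
    using AE_ge_of_weighted_integrals_nonneg[OF f X nonneg] by (simp add: AE_all_countable)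
  then show ?thesis
  proof eventually_elim
    case (elim x)
    show ?case
    proof (rule ccontr)
      assume "\<not> 0 \<le> f x"
      then obtain k where "inverse (real (Suc k)) < - f x"
        using reals_Archimedean[of "- f x"] by auto
      then show False
        using elim[rule_format, of k] by simp
    qed
  qed
qed

end

context
  fixes Dh :: "'n::finite \<Rightarrow> complex^'N::finite^'M::finite"
    and A :: "real^'n \<Rightarrow> complex^'M^'K::finite"
    and p c :: real
  assumes p: "1 \<le> p" and c: "c > 0"
    and lower_bound: "\<And>u :: real^'n \<Rightarrow> complex^'N. test_fun u \<Longrightarrow>
           Lp_norm p (\<lambda>x. A x *v diff_op Dh u x) \<ge> c * Lp_norm p (diff_op Dh u)"
begin

lemma integral_powr_wave_packet_profile_le:
  fixes a s \<xi> :: "real^'n" and r :: real and v :: "complex^'N"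
  assumes "\<forall>i. s $ i > 0" and "r > 0"
  defines "g \<equiv> \<lambda>x. of_real (box_bump0 a s x) *s (symbol Dh \<xi> *v v)
                  + of_real (1 / r) *s diff_op Dh (wave_packet a s 0 (\<lambda>_. 0) (\<lambda>_. 0) v) x"
  shows "c powr p * (\<integral>x. norm (g x) powr p \<partial>lebesgue) \<le> (\<integral>x. norm (A x *v g x) powr p \<partial>lebesgue)"
proof -
  \<comment> \<open>the test function: D maps it to \<open>r\<close> times a unimodular multiple of \<open>g\<close>\<close>
  let ?u = "wave_packet a s (r *\<^sub>R \<xi>) (\<lambda>_. 0) (\<lambda>_. 0) v"
  have Du: "diff_op Dh ?u x = (plane_wave (r *\<^sub>R \<xi>) x * of_real r) *s g x" for x
    using \<open>r > 0\<close>
    by (simp add: diff_op_wave_packet[of Dh a s "r *\<^sub>R \<xi>"] symbol_scaleR scaleR_matrix_vector_mult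
        g_def vec_eq_iff algebra_simps)
  have "Lp_norm p (diff_op Dh ?u) = r * Lp_norm p g"
    using p \<open>r > 0\<close> by (intro Lp_norm_eq_scale) (auto simp: Du norm_vector_smult norm_mult)
  moreover have "Lp_norm p (\<lambda>x. A x *v diff_op Dh ?u x) = r * Lp_norm p (\<lambda>x. A x *v g x)"
    using p \<open>r > 0\<close>
    by (intro Lp_norm_eq_scale) (auto simp: Du vector_scalar_commute norm_vector_smult norm_mult)
  ultimately have "c * Lp_norm p g \<le> Lp_norm p (\<lambda>x. A x *v g x)"
    using lower_bound[OF test_fun_wave_packet[OF assms(1), of a "r *\<^sub>R \<xi>" "\<lambda>_. 0" "\<lambda>_. 0" v]] \<open>r > 0\<close>
    by (simp add: mult.left_commute)
  then show ?thesis
    using p c by (intro integral_powr_le_of_Lp_norm_le) auto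
qed

lemma integral_powr_box_bump_le:
  fixes a s \<xi> :: "real^'n" and v :: "complex^'N"
  assumes s: "\<forall>i. s $ i > 0" and A: "Linfty A"
  defines "w \<equiv> symbol Dh \<xi> *v v"
  shows "c powr p * (\<integral>x. norm (of_real (box_bump0 a s x) *s w) powr p \<partial>lebesgue)
     \<le> (\<integral>x. norm (A x *v (of_real (box_bump0 a s x) *s w)) powr p \<partial>lebesgue)"
proof -
  define F where "F x = of_real (box_bump0 a s x) *s w" for x
  define R where "R = diff_op Dh (wave_packet a s 0 (\<lambda>_. 0) (\<lambda>_. 0) v)"
  have p0: "p > 0"
    using p by simp
  have [measurable]: "A \<in> borel_measurable lebesgue"
    using A by (simp add: Linfty_def)
  have [measurable]: "F \<in> borel_measurable lebesgue" "R \<in> borel_measurable lebesgue"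
    unfolding F_def R_def
    by (simp_all add: continuous_imp_borel_measurable_lebesgue continuous_on_diff_op_wave_packet)
  obtain C where C: "C \<ge> 0" "AE x in lebesgue. \<forall>y. norm (A x *v y) \<le> C * norm y"
    using Linfty_matrix_vector_mult_bound[OF A] by blast
  obtain MR where MR: "\<And>x. norm (R x) \<le> MR"
    using bounded_diff_op_wave_packet[OF s] unfolding R_def by blast
  have F_bound: "norm (F x) \<le> norm w + MR" and R_bound: "norm (R x) \<le> norm w + MR" for x
  proof -
    have "box_bump0 a s x * norm w \<le> norm w"
      using box_bump0_bounds[of a s x] by (intro mult_left_le_one_le) auto
    moreover have "0 \<le> MR"
      using MR[of x] norm_ge_zero order.trans by blast
    ultimately show "norm (F x) \<le> norm w + MR"
      using box_bump0_bounds[of a s x] by (simp add: F_def norm_vector_smult)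
    show "norm (R x) \<le> norm w + MR"
      using MR[of x] norm_ge_zero[of w] by linarith
  qed
  have vanish: "F x = 0 \<and> R x = 0" if "x \<notin> cbox a (a + s)" for x
    using that box_bump_eq_0[OF s] box_subset_cbox diff_op_wave_packet_eq_0[OF s]
    by (fastforce simp: F_def R_def)
  have K: "cbox a (a + s) \<in> sets lebesgue" "emeasure lebesgue (cbox a (a + s)) < \<infinity>"
    using lmeasurable_cbox by (auto simp: fmeasurable_def)
  have "(\<lambda>k. \<integral>x. norm (mat 1 *v (F x + of_real (1 / real (Suc k)) *s R x)) powr p \<partial>lebesgue)
      \<longlonglongrightarrow> (\<integral>x. norm (mat 1 *v F x) powr p \<partial>lebesgue)"
    by (rule tendsto_integral_norm_powr_perturbed[OF _ _ _ F_bound R_bound vanish K _ p0, where C = 1]) auto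
  moreover have "(\<lambda>k. \<integral>x. norm (A x *v (F x + of_real (1 / real (Suc k)) *s R x)) powr p \<partial>lebesgue)
      \<longlonglongrightarrow> (\<integral>x. norm (A x *v F x) powr p \<partial>lebesgue)"
    by (rule tendsto_integral_norm_powr_perturbed[OF _ _ _ F_bound R_bound vanish K C(2) p0 C(1)]) auto
  moreover have "c powr p * (\<integral>x. norm (F x + of_real (1 / real (Suc k)) *s R x) powr p \<partial>lebesgue)
      \<le> (\<integral>x. norm (A x *v (F x + of_real (1 / real (Suc k)) *s R x)) powr p \<partial>lebesgue)" for k
    unfolding F_def R_def w_def by (rule integral_powr_wave_packet_profile_le[OF s]) simp
  ultimately show ?thesis
    unfolding F_def by (intro LIMSEQ_le[OF tendsto_mult_left]) auto
qed

lemma weighted_integral_nonneg: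
  fixes a s \<xi> :: "real^'n" and v :: "complex^'N"
  assumes s: "\<forall>i. s $ i > 0" and A: "Linfty A"
  defines "w \<equiv> symbol Dh \<xi> *v v"
  shows "0 \<le> (\<integral>x. box_bump0 a s x powr p * (norm (A x *v w) powr p - c powr p * norm w powr p) \<partial>lebesgue)"
proof -
  define P where "P x = box_bump0 a s x powr p" for x
  have P_bounds: "0 \<le> P x" "P x \<le> 1" for x
    using box_bump0_bounds[of a s x] p by (auto simp: P_def powr_le1)
  have P_zero: "x \<notin> cbox a (a + s) \<Longrightarrow> P x = 0" for x
    using box_bump_eq_0[OF s] box_subset_cbox p by (force simp: P_def)
  have [measurable]: "A \<in> borel_measurable lebesgue"
    using A by (simp add: Linfty_def)
  obtain C where C: "C \<ge> 0" "AE x in lebesgue. \<forall>y. norm (A x *v y) \<le> C * norm y"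
    using Linfty_matrix_vector_mult_bound[OF A] by blast
  have integrable: "integrable lebesgue (\<lambda>x. P x * h x)"
    if [measurable]: "h \<in> borel_measurable lebesgue" and "AE x in lebesgue. \<bar>h x\<bar> \<le> H" for h H
  proof (rule integrable_bounded_vanishing_outside[where B = H and K = "cbox a (a + s)"])
    show "AE x in lebesgue. norm (P x * h x) \<le> H"
      using that(2)
    proof eventually_elim
      case (elim x)
      have "P x * \<bar>h x\<bar> \<le> 1 * H"
        using elim P_bounds[of x] by (intro mult_mono) auto
      then show ?case
        using P_bounds[of x] by (simp add: abs_mult)
    qed
  qed (use P_zero lmeasurable_cbox in \<open>auto simp: P_def fmeasurable_def\<close>)
  have Aw_bound: "AE x in lebesgue. \<bar>norm (A x *v w) powr p\<bar> \<le> (C * norm w) powr p"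
    using C(2) by eventually_elim (use p in \<open>auto intro: powr_mono2\<close>)
  have int_PA: "integrable lebesgue (\<lambda>x. P x * norm (A x *v w) powr p)"
    by (rule integrable[OF _ Aw_bound]) measurable
  have int_P: "integrable lebesgue (\<lambda>x. P x * (c powr p * norm w powr p))"
    by (rule integrable[where H = "c powr p * norm w powr p"]) auto
  have "c powr p * (\<integral>x. P x * norm w powr p \<partial>lebesgue) \<le> (\<integral>x. P x * norm (A x *v w) powr p \<partial>lebesgue)"
    using integral_powr_box_bump_le[OF s A, where \<xi> = \<xi> and v = v]
    by (simp add: P_def w_def norm_vector_smult vector_scalar_commute powr_mult
        abs_of_nonneg[OF box_bump0_bounds[THEN conjunct1]])
  moreover have "(\<integral>x. P x * (norm (A x *v w) powr p - c powr p * norm w powr p) \<partial>lebesgue)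
      = (\<integral>x. P x * norm (A x *v w) powr p \<partial>lebesgue) - c powr p * (\<integral>x. P x * norm w powr p \<partial>lebesgue)"
    unfolding right_diff_distrib Bochner_Integration.integral_diff[OF int_PA int_P]
    by (simp only: integral_mult_left_zero mult.assoc mult.left_commute[of "c powr p"])
  ultimately show ?thesis
    by (simp add: P_def)
qed

lemma AE_norm_mult_symbol_ge:
  assumes A: "Linfty A"
  shows "AE x in lebesgue. c * norm (symbol Dh \<xi> *v v) \<le> norm (A x *v (symbol Dh \<xi> *v v))"
proof -
  define w where "w = symbol Dh \<xi> *v v"
  have A_meas [measurable]: "A \<in> borel_measurable lebesgue"
    using A by (simp add: Linfty_def)
  obtain C where C: "C \<ge> 0" "AE x in lebesgue. \<forall>y. norm (A x *v y) \<le> C * norm y"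
    using Linfty_matrix_vector_mult_bound[OF A] by blast
  have p0: "p > 0"
    using p by simp
  have "AE x in lebesgue. 0 \<le> norm (A x *v w) powr p - c powr p * norm w powr p"
  proof (rule AE_nonneg_of_weighted_integrals_nonneg
      [where \<psi> = "\<lambda>a s x. box_bump0 a s x powr p" and \<delta> = "(exp (-8) ^ CARD('n)) powr p"])
    show "(\<lambda>x. box_bump0 a s x powr p) \<in> borel_measurable lebesgue" for a s
      by measurable
    show "0 \<le> box_bump0 a s x powr p \<and> box_bump0 a s x powr p \<le> 1" for a s x
      using box_bump0_bounds[of a s x] p0 by (auto intro: powr_le1)
    show "box_bump0 a s x powr p = 0" if "\<forall>i. s $ i > 0" "x \<notin> cbox a (a + s)" for a s x
      using that box_bump_eq_0 box_subset_cbox by fastforce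
    show "(exp (- 8) ^ CARD('n)) powr p \<le> box_bump0 a s x powr p"
      if "\<forall>i. s $ i > 0" "x \<in> cbox (a + (1 / 4) *\<^sub>R s) (a + (3 / 4) *\<^sub>R s)" for a s x :: "real^'n"
      using box_bump0_ge[OF that] p0 by (intro powr_mono2) auto
    show "AE x in lebesgue. \<bar>norm (A x *v w) powr p - c powr p * norm w powr p\<bar>
        \<le> (C * norm w) powr p + c powr p * norm w powr p"
      using C(2) by eventually_elim (use p0 in \<open>auto intro!: powr_mono2 order.trans[OF abs_triangle_ineq4]\<close>)
    show "0 \<le> (\<integral>x. box_bump0 a s x powr p * (norm (A x *v w) powr p - c powr p * norm w powr p) \<partial>lebesgue)"
      if "\<forall>i. s $ i > 0" for a s
      unfolding w_def by (rule weighted_integral_nonneg[OF that A])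
  qed (use p0 in measurable)
  then show ?thesis
  proof eventually_elim
    case (elim x)
    then have "(c * norm w) powr p \<le> norm (A x *v w) powr p"
      using c by (simp add: powr_mult)
    then show ?case
      unfolding w_def[symmetric] by (meson not_le powr_less_mono2 norm_ge_zero p0)
  qed
qed

end

theorem propositionA2:
  fixes Dh :: "'n::finite \<Rightarrow> complex^'N::finite^'M::finite"
    and A :: "real^'n \<Rightarrow> complex^'M^'K::finite"
    and p c :: real
  assumes "Linfty A"
    and "1 \<le> p"
    and "c > 0"
    and "\<And>u :: real^'n \<Rightarrow> complex^'N. test_fun u \<Longrightarrow>
           Lp_norm p (\<lambda>x. A x *v diff_op Dh u x) \<ge> c * Lp_norm p (diff_op Dh u)"
  shows "\<exists>c'>0. \<forall>\<xi> :: real^'n. \<forall>v :: complex^'N. AE x in lebesgue.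
           norm (A x *v (symbol Dh \<xi> *v v)) \<ge> c' * norm (symbol Dh \<xi> *v v)"
  using AE_norm_mult_symbol_ge[OF assms(2-4,1)] assms(3) by blast

end
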